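(* Let $n\ge3$, let $(f,\Gamma)$ satisfy the standing structural assumptions, let $R>0$ and $x_0\in\mathbb R^n$. Then $u^{(in)}_{R,x_0}$ is the unique continuous viscosity solution of $f(\lambda(-A^u))=1$, $u>0$ in $B_R(x_0)$, with $u(x)\to+\infty$ as $\mathrm{dist}(x,\partial B_R(x_0))\to0$.
   Context: Let $n\ge3$. For a positive $C^2$ function $u$, its conformal Hessian is $A^u=-\frac{2}{n-2}u^{-\frac{n+2}{n-2}}\nabla^2u+\frac{2n}{(n-2)^2}u^{-\frac{2n}{n-2}}\nabla u\otimes\nabla u-\frac{2}{(n-2)^2}u^{-\frac{2n}{n-2}}|\nabla u|^2I$, and $\lambda(-A^u)$ is the vector of eigenvalues of $-A^u$. Let $\Gamma_n=\{\mu:\mu_i>0\ \forall i\}$. Standing structural assumptions on $(f,\Gamma)$: $\Gamma\subset\mathbb R^n$ is an open symmetric cone with vertex at the origin, $\Gamma+\Gamma_n\subset\Gamma$; $f\in C^0(\bar\Gamma)$ symmetric, $f>0$ in $\Gamma$, $f=0$ on $\partial\Gamma$, $f(\lambda+\mu)\ge f(\lambda)$ for $\lambda\in\Gamma,\mu\in\Gamma_n$, $f$ homogeneous of some positive degree. Viscosity solutions: sub-solutions $u\in USC$ satisfy $f(\lambda(-A^\varphi(x_0)))\ge1$ for every $C^2$ $\varphi$ touching $u$ from above at $x_0$; super-solutions $u\in LSC$ satisfy either $\lambda(-A^\varphi(x_0))\notin\bar\Gamma$ or $f(\lambda(-A^\varphi(x_0)))\le1$ for every $C^2$ $\varphi$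 touching from below; solutions are continuous functions that are both. Canonical solutions: there is a unique constant $\alpha=\alpha(f)>0$ such that for all $R>0$, $x_0\in\mathbb R^n$ the functions $u^{(in)}_{R,x_0}(x)=\alpha\big(\frac{R}{R^2-|x-x_0|^2}\big)^{\frac{n-2}{2}}$ and $u^{(out)}_{R,x_0}(x)=\alpha\big(\frac{R}{|x-x_0|^2-R^2}\big)^{\frac{n-2}{2}}$ satisfy $f(\lambda(-A^{u}))=1$ in $B_R(x_0)$ and in $\mathbb R^n\setminus\bar B_R(x_0)$ respectively (the eigenvalue vectors being constant). *)

theory Defs
  imports "HOL-Analysis.Analysis"
begin

text \<open>Points of R^n are vectors of type real^'n; the dimension is n = CARD('n).\<close>

definition grad :: "(real^'n::finite \<Rightarrow> real) \<Rightarrow> real^'n \<Rightarrow> real^'n" where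
  "grad u x = (\<chi> i. frechet_derivative u (at x) (axis i 1))"

definition hess :: "(real^'n::finite \<Rightarrow> real) \<Rightarrow> real^'n \<Rightarrow> real^'n^'n" where
  "hess u x = matrix (frechet_derivative (grad u) (at x))"

definition C2_on :: "(real^'n::finite \<Rightarrow> real) \<Rightarrow> (real^'n) set \<Rightarrow> bool" where
  "C2_on u S \<longleftrightarrow> open S \<and>
     (\<exists>Du H. (\<forall>x\<in>S. (u has_derivative (\<lambda>h. Du x \<bullet> h)) (at x) \<and>
                      (Du has_derivative (\<lambda>h. H x *v h)) (at x)) \<and> continuous_on S H)"

definition conf_hess :: "(real^'n::finite \<Rightarrow> real) \<Rightarrow> real^'n \<Rightarrow> real^'n^'n" where
  "conf_hess u x =
     (let n = real CARD('n); g = grad u x; c = u x in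
        (- (2 / (n - 2)) * c powr (- (n + 2) / (n - 2))) *\<^sub>R hess u x
      + ((2 * n / (n - 2)^2) * c powr (- 2 * n / (n - 2))) *\<^sub>R (\<chi> i j. g $ i * g $ j)
      - ((2 / (n - 2)^2) * c powr (- 2 * n / (n - 2)) * (norm g)^2) *\<^sub>R mat 1)"

definition diag_mat :: "real^'n::finite \<Rightarrow> real^'n^'n" where
  "diag_mat lam = (\<chi> i j. if i = j then lam $ i else 0)"

definition eigvals :: "real^'n::finite^'n \<Rightarrow> real^'n \<Rightarrow> bool" where
  "eigvals M lam \<longleftrightarrow> (\<exists>Q. orthogonal_matrix Q \<and> M = transpose Q ** diag_mat lam ** Q)"

definition posCone :: "(real^'n::finite) set" where
  "posCone = {mu. \<forall>i. mu $ i > 0}"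

definition structural :: "(real^'n::finite \<Rightarrow> real) \<Rightarrow> (real^'n) set \<Rightarrow> bool" where
  "structural f \<Gamma> \<longleftrightarrow>
     open \<Gamma> \<and> \<Gamma> \<noteq> {} \<and>
     (\<forall>t>0. \<forall>lam\<in>\<Gamma>. t *\<^sub>R lam \<in> \<Gamma>) \<and>
     (\<forall>p lam. p permutes (UNIV::'n set) \<and> lam \<in> \<Gamma> \<longrightarrow> (\<chi> i. lam $ p i) \<in> \<Gamma>) \<and>
     (\<forall>lam\<in>\<Gamma>. \<forall>mu\<in>posCone. lam + mu \<in> \<Gamma>) \<and>
     continuous_on (closure \<Gamma>) f \<and>
     (\<forall>p lam. p permutes (UNIV::'n set) \<and> lam \<in> closure \<Gamma> \<longrightarrow> f (\<chi> i. lam $ p i) = f lam) \<and>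
     (\<forall>lam\<in>\<Gamma>. f lam > 0) \<and>
     (\<forall>lam\<in>frontier \<Gamma>. f lam = 0) \<and>
     (\<forall>lam\<in>\<Gamma>. \<forall>mu\<in>posCone. f (lam + mu) \<ge> f lam) \<and>
     (\<exists>k>0. \<forall>lam\<in>closure \<Gamma>. \<forall>t>0. f (t *\<^sub>R lam) = t powr k * f lam)"

text \<open>Pointwise conditions on the matrix -A (f only defined on closure of Gamma).\<close>
definition sub_cond :: "(real^'n::finite \<Rightarrow> real) \<Rightarrow> (real^'n) set \<Rightarrow> real^'n^'n \<Rightarrow> bool" where
  "sub_cond f \<Gamma> M \<longleftrightarrow> (\<forall>lam. eigvals M lam \<longrightarrow> lam \<in> closure \<Gamma> \<and> f lam \<ge> 1)"

definition super_cond :: "(real^'n::finite \<Rightarrow> real) \<Rightarrow> (real^'n) set \<Rightarrow> real^'n^'n \<Rightarrow> bool" where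
  "super_cond f \<Gamma> M \<longleftrightarrow> (\<forall>lam. eigvals M lam \<longrightarrow> lam \<notin> closure \<Gamma> \<or> f lam \<le> 1)"

definition eq_cond :: "(real^'n::finite \<Rightarrow> real) \<Rightarrow> (real^'n) set \<Rightarrow> real^'n^'n \<Rightarrow> bool" where
  "eq_cond f \<Gamma> M \<longleftrightarrow> (\<forall>lam. eigvals M lam \<longrightarrow> lam \<in> closure \<Gamma> \<and> f lam = 1)"

definition usc_on :: "(real^'n::finite) set \<Rightarrow> (real^'n \<Rightarrow> real) \<Rightarrow> bool" where
  "usc_on S u \<longleftrightarrow> (\<forall>x\<in>S. \<forall>e>0. \<exists>d>0. \<forall>y\<in>S. dist y x < d \<longrightarrow> u y < u x + e)"

definition lsc_on :: "(real^'n::finite) set \<Rightarrow> (real^'n \<Rightarrow> real) \<Rightarrow> bool" where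
  "lsc_on S u \<longleftrightarrow> (\<forall>x\<in>S. \<forall>e>0. \<exists>d>0. \<forall>y\<in>S. dist y x < d \<longrightarrow> u y > u x - e)"

definition visc_sub :: "(real^'n::finite \<Rightarrow> real) \<Rightarrow> (real^'n) set \<Rightarrow> (real^'n) set \<Rightarrow> (real^'n \<Rightarrow> real) \<Rightarrow> bool" where
  "visc_sub f \<Gamma> \<Omega> u \<longleftrightarrow> usc_on \<Omega> u \<and>
     (\<forall>x0\<in>\<Omega>. \<forall>\<phi> U. open U \<and> x0 \<in> U \<and> U \<subseteq> \<Omega> \<and> C2_on \<phi> U \<and> \<phi> x0 = u x0 \<and>
        (\<forall>x\<in>U. u x \<le> \<phi> x) \<longrightarrow> sub_cond f \<Gamma> (- conf_hess \<phi> x0))"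

definition visc_super :: "(real^'n::finite \<Rightarrow> real) \<Rightarrow> (real^'n) set \<Rightarrow> (real^'n) set \<Rightarrow> (real^'n \<Rightarrow> real) \<Rightarrow> bool" where
  "visc_super f \<Gamma> \<Omega> u \<longleftrightarrow> lsc_on \<Omega> u \<and>
     (\<forall>x0\<in>\<Omega>. \<forall>\<phi> U. open U \<and> x0 \<in> U \<and> U \<subseteq> \<Omega> \<and> C2_on \<phi> U \<and> \<phi> x0 = u x0 \<and>
        (\<forall>x\<in>U. \<phi> x \<le> u x) \<longrightarrow> super_cond f \<Gamma> (- conf_hess \<phi> x0))"

definition visc_sol :: "(real^'n::finite \<Rightarrow> real) \<Rightarrow> (real^'n) set \<Rightarrow> (real^'n) set \<Rightarrow> (real^'n \<Rightarrow> real) \<Rightarrow> bool" where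
  "visc_sol f \<Gamma> \<Omega> u \<longleftrightarrow> continuous_on \<Omega> u \<and> visc_sub f \<Gamma> \<Omega> u \<and> visc_super f \<Gamma> \<Omega> u"

definition u_in :: "real \<Rightarrow> real \<Rightarrow> real^'n::finite \<Rightarrow> real^'n \<Rightarrow> real" where
  "u_in a R x0 x = a * (R / (R^2 - (dist x x0)^2)) powr ((real CARD('n) - 2) / 2)"

definition u_out :: "real \<Rightarrow> real \<Rightarrow> real^'n::finite \<Rightarrow> real^'n \<Rightarrow> real" where
  "u_out a R x0 x = a * (R / ((dist x x0)^2 - R^2)) powr ((real CARD('n) - 2) / 2)"

text \<open>a is the constant alpha(f): u_in, u_out solve the equation classically for all R, x0.\<close>
definition canonical_const :: "(real^'n::finite \<Rightarrow> real) \<Rightarrow> (real^'n) set \<Rightarrow> real \<Rightarrow> bool" where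
  "canonical_const f \<Gamma> a \<longleftrightarrow> a > 0 \<and>
     (\<forall>R>0. \<forall>x0::real^'n.
        C2_on (u_in a R x0) (ball x0 R) \<and>
        (\<forall>x\<in>ball x0 R. eq_cond f \<Gamma> (- conf_hess (u_in a R x0) x)) \<and>
        C2_on (u_out a R x0) (- cball x0 R) \<and>
        (\<forall>x\<in>- cball x0 R. eq_cond f \<Gamma> (- conf_hess (u_out a R x0) x)))"

definition blowup_sol :: "(real^'n::finite \<Rightarrow> real) \<Rightarrow> (real^'n) set \<Rightarrow> real \<Rightarrow> real^'n \<Rightarrow> (real^'n \<Rightarrow> real) \<Rightarrow> bool" where
  "blowup_sol f \<Gamma> R x0 u \<longleftrightarrow>
     visc_sol f \<Gamma> (ball x0 R) u \<and> (\<forall>x\<in>ball x0 R. u x > 0) \<and>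
     (\<forall>M. \<exists>d>0. \<forall>x\<in>ball x0 R. infdist x (sphere x0 R) < d \<longrightarrow> u x > M)"

end

theory Submission
  imports Defs
begin

text \<open>
  The canonical solution u_R is classical and its conformal Hessian is a multiple of the identity,
  -A = t I with t = 2 a powr (-4/(n-2)) and f(t,...,t) = 1. A C^2 function touching it from
  above (below) has the same value and gradient and a larger (smaller) Hessian at the contact
  point, so the quadratic form of its -A dominates (is dominated by) t |h|^2; hence every
  eigenvalue is at least (at most) t, and monotonicity of f gives the viscosity inequalities.

  For uniqueness compare a blow-up solution v with the canonical solutions u_R' of concentric
  balls. If v > u_R' somewhere for some R' < R, the supremum c > 1 of v / u_R' is attained inside
  the ball of radius R', since u_R' blows up on its boundary while v stays bounded there; so
  c u_R' touches v from above. But c u_R' is again canonical with eigenvalue s t,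
  s = c powr (-4/(n-2)) < 1, and by homogeneity f(s t,...,s t) = s powr k < 1, contradicting
  the sub-solution property of v. Symmetrically u_R' <= v for R' > R, and letting R' -> R
  gives v = u_R.
\<close>


section \<open>Second-order contact\<close>

lemma outer_product_mult_vec:
  fixes e h :: "real^'n::finite"
  shows "(\<chi> i j. e$i * e$j) *v h = (e \<bullet> h) *\<^sub>R e"
  by (simp add: vec_eq_iff matrix_vector_mult_def inner_vec_def sum_distrib_left algebra_simps)

lemma grad_hess_eqI:
  fixes u :: "real^'n::finite \<Rightarrow> real"
  assumes S: "open S" "x \<in> S"
    and du: "\<And>y. y \<in> S \<Longrightarrow> (u has_derivative (\<lambda>h. Du y \<bullet> h)) (at y)"
    and dH: "(Du has_derivative (\<lambda>h. H *v h)) (at x)"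
  shows "grad u x = Du x" and "hess u x = H"
proof -
  have grad: "grad u y = Du y" if "y \<in> S" for y
  proof -
    have "frechet_derivative u (at y) = (\<lambda>h. Du y \<bullet> h)"
      using frechet_derivative_at[OF du[OF that]] by simp
    then show ?thesis by (simp add: grad_def vec_eq_iff inner_axis)
  qed
  then show "grad u x = Du x" using S by blast
  have "(grad u has_derivative (\<lambda>h. H *v h)) (at x)"
    by (rule has_derivative_transform_within_open[OF dH S]) (simp add: grad)
  then have "frechet_derivative (grad u) (at x) = (\<lambda>h. H *v h)"
    using frechet_derivative_at by metis
  then show "hess u x = H" by (simp add: hess_def)
qed

lemma C2_onE:
  assumes "C2_on u S"
  obtains Du H where "open S"
    and "\<And>x. x \<in> S \<Longrightarrow> (u has_derivative (\<lambda>h. Du x \<bullet> h)) (at x)"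
    and "\<And>x. x \<in> S \<Longrightarrow> (Du has_derivative (\<lambda>h. H x *v h)) (at x)"
  using assms unfolding C2_on_def by blast

lemma C2_on_subset:
  assumes "C2_on u S" "open V" "V \<subseteq> S"
  shows "C2_on u V"
  using assms continuous_on_subset unfolding C2_on_def by (metis subsetD)

lemma has_real_derivative_along_line:
  fixes g :: "real^'n::finite \<Rightarrow> real"
  assumes "(g has_derivative (\<lambda>h. Dg \<bullet> h)) (at (y + t *\<^sub>R h))"
  shows "((\<lambda>s. g (y + s *\<^sub>R h)) has_real_derivative (Dg \<bullet> h)) (at t)"
proof -
  have "((\<lambda>s. y + s *\<^sub>R h) has_derivative (\<lambda>s. s *\<^sub>R h)) (at t)"
    by (rule derivative_eq_intros refl)+ simp
  from has_derivative_compose[OF this assms] show ?thesis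
    by (rule has_derivative_imp_has_field_derivative) (simp add: inner_scaleR_right)
qed

lemma has_real_derivative_along_line_inner:
  fixes Dg :: "real^'n::finite \<Rightarrow> real^'n"
  assumes "(Dg has_derivative (\<lambda>k. H *v k)) (at y)"
  shows "((\<lambda>s. Dg (y + s *\<^sub>R h) \<bullet> h) has_real_derivative (h \<bullet> (H *v h))) (at 0)"
proof -
  have "((\<lambda>s. y + s *\<^sub>R h) has_derivative (\<lambda>s. s *\<^sub>R h)) (at 0)"
    by (rule derivative_eq_intros refl)+ simp
  from has_derivative_compose[OF this] assms
  have "((\<lambda>s. Dg (y + s *\<^sub>R h)) has_derivative (\<lambda>s. H *v (s *\<^sub>R h))) (at 0)"
    by simp
  then have "((\<lambda>s. Dg (y + s *\<^sub>R h) \<bullet> h) has_derivative (\<lambda>s. (H *v (s *\<^sub>R h)) \<bullet> h)) (at 0)"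
    by (rule derivative_eq_intros refl)+ simp
  then show ?thesis
    by (rule has_derivative_imp_has_field_derivative)
       (simp add: matrix_vector_mult_scaleR inner_commute)
qed

lemma local_min_gradient_hessian:
  fixes g :: "real^'n::finite \<Rightarrow> real"
  assumes V: "open V" "y \<in> V" and min: "\<And>z. z \<in> V \<Longrightarrow> g y \<le> g z"
    and dg: "\<And>z. z \<in> V \<Longrightarrow> (g has_derivative (\<lambda>h. Dg z \<bullet> h)) (at z)"
    and dH: "(Dg has_derivative (\<lambda>k. H *v k)) (at y)"
  shows "Dg y = 0" and "0 \<le> h \<bullet> (H *v h)"
proof -
  have "eventually (\<lambda>z. g y \<le> g z) (at y)"
    using V min by (auto simp: eventually_at_topological)
  then have "(\<lambda>h. Dg y \<bullet> h) = (\<lambda>h. 0)"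
    by (rule has_derivative_local_min[OF dg[OF V(2)]])
  then have "Dg y \<bullet> Dg y = 0" by metis
  then show Dy: "Dg y = 0" by simp
  show "0 \<le> h \<bullet> (H *v h)"
  proof (rule ccontr)
    assume neg: "\<not> 0 \<le> h \<bullet> (H *v h)"
    then have "h \<noteq> 0" by auto
    then have nh: "norm h > 0" by simp
    obtain \<delta> where \<delta>: "\<delta> > 0" "\<And>t. 0 < t \<Longrightarrow> t < \<delta> \<Longrightarrow> Dg (y + t *\<^sub>R h) \<bullet> h < 0"
      using DERIV_neg_dec_right[OF has_real_derivative_along_line_inner[OF dH, of h]] neg Dy
      by force
    obtain \<epsilon> where \<epsilon>: "\<epsilon> > 0" "ball y \<epsilon> \<subseteq> V"
      using V open_contains_ball by blast
    define s where "s = min \<delta> (\<epsilon> / norm h) / 2"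
    have s: "0 < s" "s < \<delta>" "s * norm h < \<epsilon>"
      using \<delta> \<epsilon> nh by (auto simp: s_def min_def field_simps)
    have line: "y + t *\<^sub>R h \<in> V" if "0 \<le> t" "t \<le> s" for t
    proof -
      have "t * norm h < \<epsilon>"
        using mult_right_mono[OF that(2), of "norm h"] s(3) by simp
      then show ?thesis using \<epsilon>(2) that by (auto simp: dist_norm)
    qed
    obtain z where z: "0 < z" "z < s"
      "g (y + s *\<^sub>R h) - g (y + 0 *\<^sub>R h) = (s - 0) * (Dg (y + z *\<^sub>R h) \<bullet> h)"
      using MVT2[OF s(1), of "\<lambda>t. g (y + t *\<^sub>R h)" "\<lambda>t. Dg (y + t *\<^sub>R h) \<bullet> h"]
        has_real_derivative_along_line[OF dg[OF line]] by blast
    have "s * (Dg (y + z *\<^sub>R h) \<bullet> h) < 0"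
      using \<delta>(2)[of z] z s by (simp add: mult_pos_neg)
    then have "g (y + s *\<^sub>R h) < g y" using z by simp
    then show False using min[OF line[of s]] s by simp
  qed
qed

lemma conf_hess_first_order_contact:
  fixes u \<phi> :: "real^'n::finite \<Rightarrow> real"
  assumes "\<phi> y = u y" "grad \<phi> y = grad u y"
  shows "- conf_hess \<phi> y = - conf_hess u y +
     ((2 / (real CARD('n) - 2)) * u y powr (- (real CARD('n) + 2) / (real CARD('n) - 2)))
       *\<^sub>R (hess \<phi> y - hess u y)"
  unfolding conf_hess_def Let_def assms by (simp add: algebra_simps)

lemma conf_hess_radial:
  fixes u :: "real^'n::finite \<Rightarrow> real"
  assumes "grad u x = \<gamma> *\<^sub>R e" and "hess u x = \<alpha> *\<^sub>R (\<chi> i j. e$i * e$j) + \<gamma> *\<^sub>R mat 1"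
  defines "N \<equiv> real CARD('n)"
  shows "conf_hess u x =
    (- (2 / (N - 2)) * u x powr (- (N + 2) / (N - 2)) * \<alpha>
       + (2 * N / (N - 2)^2) * u x powr (- 2 * N / (N - 2)) * \<gamma>^2) *\<^sub>R (\<chi> i j. e$i * e$j)
    + (- (2 / (N - 2)) * u x powr (- (N + 2) / (N - 2)) * \<gamma>
       - (2 / (N - 2)^2) * u x powr (- 2 * N / (N - 2)) * \<gamma>^2 * (e \<bullet> e)) *\<^sub>R mat 1"
proof -
  have outer: "(\<chi> i j. (\<gamma> *\<^sub>R e) $ i * (\<gamma> *\<^sub>R e) $ j) = \<gamma>^2 *\<^sub>R (\<chi> i j. e$i * e$j)"
    by (simp add: vec_eq_iff power2_eq_square)
  have norm: "(norm (\<gamma> *\<^sub>R e))^2 = \<gamma>^2 * (e \<bullet> e)"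
    by (simp only: power2_norm_eq_inner inner_scaleR_left inner_scaleR_right)
       (simp add: power2_eq_square)
  show ?thesis
    unfolding conf_hess_def Let_def assms(1,2) N_def[symmetric] outer norm
    by (simp add: algebra_simps)
qed

lemma quadratic_form_conf_hess_touching:
  fixes u \<phi> :: "real^'n::finite \<Rightarrow> real"
  assumes n: "CARD('n) \<ge> 3" and C2: "C2_on u U" "C2_on \<phi> U" and y: "y \<in> U"
    and touch: "\<phi> y = u y" "\<forall>x\<in>U. u x \<le> \<phi> x"
  shows "h \<bullet> (- conf_hess u y *v h) \<le> h \<bullet> (- conf_hess \<phi> y *v h)"
proof -
  obtain Du Hu where U: "open U"
    and du: "\<And>x. x \<in> U \<Longrightarrow> (u has_derivative (\<lambda>h. Du x \<bullet> h)) (at x)"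
    and dHu: "\<And>x. x \<in> U \<Longrightarrow> (Du has_derivative (\<lambda>h. Hu x *v h)) (at x)"
    using C2(1) by (rule C2_onE) blast
  obtain D\<phi> H\<phi> where d\<phi>: "\<And>x. x \<in> U \<Longrightarrow> (\<phi> has_derivative (\<lambda>h. D\<phi> x \<bullet> h)) (at x)"
    and dH\<phi>: "\<And>x. x \<in> U \<Longrightarrow> (D\<phi> has_derivative (\<lambda>h. H\<phi> x *v h)) (at x)"
    using C2(2) by (rule C2_onE) blast
  define K where "K = (2 / (real CARD('n) - 2)) *
    u y powr (- (real CARD('n) + 2) / (real CARD('n) - 2))"
  have min: "\<phi> y - u y \<le> \<phi> z - u z" if "z \<in> U" for z
    using touch that by auto
  have dg: "((\<lambda>x. \<phi> x - u x) has_derivative (\<lambda>h. (D\<phi> z - Du z) \<bullet> h)) (at z)" if "z \<in> U" for z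
    using has_derivative_diff[OF d\<phi>[OF that] du[OF that]] by (simp add: inner_diff_left)
  have dH: "((\<lambda>x. D\<phi> x - Du x) has_derivative (\<lambda>h. (H\<phi> y - Hu y) *v h)) (at y)"
    using has_derivative_diff[OF dH\<phi>[OF y] dHu[OF y]] by (simp add: matrix_vector_mult_diff_rdistrib)
  have grad: "D\<phi> y - Du y = 0" and psd: "0 \<le> h \<bullet> ((H\<phi> y - Hu y) *v h)"
    using local_min_gradient_hessian[OF U y min dg dH] by auto
  have "grad u y = Du y" "hess u y = Hu y"
    using grad_hess_eqI[OF U y du dHu[OF y]] by auto
  moreover have "grad \<phi> y = D\<phi> y" "hess \<phi> y = H\<phi> y"
    using grad_hess_eqI[OF U y d\<phi> dH\<phi>[OF y]] by auto
  ultimately have "- conf_hess \<phi> y = - conf_hess u y + K *\<^sub>R (H\<phi> y - Hu y)"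
    using grad conf_hess_first_order_contact[of \<phi> y u, OF touch(1)] by (simp add: K_def)
  then have "h \<bullet> (- conf_hess \<phi> y *v h) =
      h \<bullet> (- conf_hess u y *v h) + K * (h \<bullet> ((H\<phi> y - Hu y) *v h))"
    by (simp only: matrix_vector_mult_add_rdistrib scaleR_matrix_vector_assoc[symmetric]
        inner_add_right inner_scaleR_right)
  moreover have "0 \<le> K" using n by (simp add: K_def)
  ultimately show ?thesis using psd by simp
qed

section \<open>Eigenvalues and the operator\<close>

lemma eigvals_quadratic_form:
  fixes M :: "real^'n::finite^'n"
  assumes "eigvals M lam"
  obtains h where "h \<bullet> h = 1" "h \<bullet> (M *v h) = lam $ i"
proof -
  obtain Q where Q: "orthogonal_matrix Q" "M = transpose Q ** diag_mat lam ** Q"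
    using assms by (auto simp: eigvals_def)
  define h where "h = transpose Q *v axis i 1"
  have inner_transpose: "x \<bullet> (transpose Q *v z) = (Q *v x) \<bullet> z" for x z
    by (simp add: dot_lmul_matrix[symmetric] inner_commute)
  have "Q ** transpose Q = mat 1" using Q(1) by (simp add: orthogonal_matrix_def)
  then have Qh: "Q *v h = axis i 1"
    unfolding h_def by (metis matrix_vector_mul_assoc matrix_vector_mul_lid)
  have "(if P then c else 0) * d = (if P then c * d else 0)" for P and c d :: real
    by simp
  then have diag: "diag_mat lam *v axis i 1 = lam $ i *\<^sub>R axis i (1::real)"
    by (simp add: diag_mat_def matrix_vector_mult_def axis_def vec_eq_iff)
  show thesis
  proof
    show "h \<bullet> h = 1"
      by (subst (2) h_def, subst inner_transpose) (simp add: Qh inner_axis_axis)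
    show "h \<bullet> (M *v h) = lam $ i"
      by (simp only: Q(2) matrix_vector_mul_assoc[symmetric] inner_transpose Qh diag)
         (simp add: inner_axis_axis)
  qed
qed

lemma eigvals_ge:
  fixes M :: "real^'n::finite^'n"
  assumes "eigvals M lam" "\<And>h. t * (h \<bullet> h) \<le> h \<bullet> (M *v h)"
  shows "t \<le> lam $ i"
  by (metis assms eigvals_quadratic_form mult.right_neutral)

lemma eigvals_le:
  fixes M :: "real^'n::finite^'n"
  assumes "eigvals M lam" "\<And>h. h \<bullet> (M *v h) \<le> t * (h \<bullet> h)"
  shows "lam $ i \<le> t"
  by (metis assms eigvals_quadratic_form mult.right_neutral)

lemma eigvals_scalar_mat: "eigvals (t *\<^sub>R mat 1 :: real^'n::finite^'n) (\<chi> i. t)"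
  unfolding eigvals_def
proof (intro exI conjI)
  show "orthogonal_matrix (mat 1 :: real^'n^'n)" by (rule orthogonal_matrix_id)
  have "diag_mat (\<chi> i. t) = (t *\<^sub>R mat 1 :: real^'n^'n)"
    by (simp add: diag_mat_def vec_eq_iff mat_def)
  then show "t *\<^sub>R mat 1 = transpose (mat 1) ** diag_mat (\<chi> i. t) ** (mat 1 :: real^'n^'n)"
    by simp
qed

lemma structuralD:
  assumes "structural f \<Gamma>"
  shows "\<And>t lam. t > 0 \<Longrightarrow> lam \<in> \<Gamma> \<Longrightarrow> t *\<^sub>R lam \<in> \<Gamma>"
    and "\<And>lam mu. lam \<in> \<Gamma> \<Longrightarrow> mu \<in> posCone \<Longrightarrow> lam + mu \<in> \<Gamma>"
    and "continuous_on (closure \<Gamma>) f"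
    and "\<And>lam. lam \<in> frontier \<Gamma> \<Longrightarrow> f lam = 0"
    and "\<And>lam mu. lam \<in> \<Gamma> \<Longrightarrow> mu \<in> posCone \<Longrightarrow> f lam \<le> f (lam + mu)"
    and "\<exists>k>0. \<forall>lam\<in>closure \<Gamma>. \<forall>t>0. f (t *\<^sub>R lam) = t powr k * f lam"
  using assms unfolding structural_def by auto

lemma f_eq_0_if_not_mem:
  assumes "structural f \<Gamma>" "lam \<in> closure \<Gamma>" "lam \<notin> \<Gamma>"
  shows "f lam = 0"
proof -
  have "lam \<in> frontier \<Gamma>"
    using assms(2,3) interior_subset unfolding frontier_def by blast
  then show ?thesis by (rule structuralD(4)[OF assms(1)])
qed

lemma f_mono_componentwise:
  fixes f :: "real^'n::finite \<Rightarrow> real"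
  assumes S: "structural f \<Gamma>" and lam: "lam \<in> \<Gamma>" and le: "\<And>i. lam $ i \<le> mu $ i"
  shows "mu \<in> closure \<Gamma>" and "f lam \<le> f mu"
proof -
  define mu\<^sub>e where "mu\<^sub>e e = mu + e *\<^sub>R (\<chi> i. 1)" for e :: real
  have mu\<^sub>e: "mu\<^sub>e e \<in> \<Gamma> \<and> f lam \<le> f (mu\<^sub>e e)" if "e > 0" for e
  proof -
    have "mu - lam + e *\<^sub>R (\<chi> i. 1) \<in> posCone"
      using le that by (auto simp: posCone_def add_nonneg_pos)
    from structuralD(2,5)[OF S lam this] show ?thesis by (simp add: mu\<^sub>e_def)
  qed
  have lim: "(mu\<^sub>e \<longlongrightarrow> mu) (at_right 0)"
    unfolding mu\<^sub>e_def by (auto intro!: tendsto_eq_intros)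
  have ev: "eventually (\<lambda>e. mu\<^sub>e e \<in> closure \<Gamma>) (at_right 0)"
    using mu\<^sub>e closure_subset by (auto intro!: eventually_mono[OF eventually_at_right_less])
  show mu: "mu \<in> closure \<Gamma>"
    using Lim_in_closed_set[OF closed_closure ev _ lim] by simp
  have "((\<lambda>e. f (mu\<^sub>e e)) \<longlongrightarrow> f mu) (at_right 0)"
    by (rule continuous_on_tendsto_compose[OF structuralD(3)[OF S] lim mu ev])
  moreover have "eventually (\<lambda>e. f lam \<le> f (mu\<^sub>e e)) (at_right 0)"
    using mu\<^sub>e by (auto intro!: eventually_mono[OF eventually_at_right_less])
  ultimately show "f lam \<le> f mu" by (rule tendsto_lowerbound) simp
qed

lemma f_le_componentwise:
  fixes f :: "real^'n::finite \<Rightarrow> real"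
  assumes S: "structural f \<Gamma>" and mu: "mu \<in> \<Gamma>" and le: "\<And>i. lam $ i \<le> mu $ i"
    and lam: "lam \<in> closure \<Gamma>"
  shows "f lam \<le> f mu"
proof (cases "lam \<in> \<Gamma>")
  case True
  show ?thesis by (rule f_mono_componentwise(2)[OF S True le])
next
  case False
  then have "f lam = 0" by (rule f_eq_0_if_not_mem[OF S lam])
  moreover have "0 < f mu" using S mu by (simp add: structural_def)
  ultimately show ?thesis by simp
qed

lemma continuous_on_imp_usc_lsc:
  assumes "continuous_on S u"
  shows "usc_on S u" and "lsc_on S u"
proof -
  have "\<exists>d>0. \<forall>y\<in>S. dist y x < d \<longrightarrow> u y < u x + e \<and> u x - e < u y" if x: "x \<in> S" "e > 0" for x e
  proof -
    obtain d where "d > 0" "\<forall>y\<in>S. dist y x < d \<longrightarrow> dist (u y) (u x) < e"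
      using assms x unfolding continuous_on_iff by metis
    then show ?thesis by (auto simp: dist_real_def abs_diff_less_iff)
  qed
  then show "usc_on S u" "lsc_on S u" unfolding usc_on_def lsc_on_def by meson+
qed

lemma visc_subD:
  assumes "visc_sub f \<Gamma> \<Omega> u" "open U" "y \<in> U" "U \<subseteq> \<Omega>" "C2_on \<phi> U"
    and "\<phi> y = u y" "\<forall>x\<in>U. u x \<le> \<phi> x"
  shows "sub_cond f \<Gamma> (- conf_hess \<phi> y)"
  using assms unfolding visc_sub_def by blast

lemma visc_superD:
  assumes "visc_super f \<Gamma> \<Omega> u" "open U" "y \<in> U" "U \<subseteq> \<Omega>" "C2_on \<phi> U"
    and "\<phi> y = u y" "\<forall>x\<in>U. \<phi> x \<le> u x"
  shows "super_cond f \<Gamma> (- conf_hess \<phi> y)"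
  using assms unfolding visc_super_def by blast

section \<open>The canonical solution in the ball\<close>

text \<open>Half the conformal factor of the Poincare metric of the ball of radius R about x0.\<close>

definition poincare_factor :: "real \<Rightarrow> real^'n::finite \<Rightarrow> real^'n \<Rightarrow> real" where
  "poincare_factor R x0 y = R / (R^2 - (y - x0) \<bullet> (y - x0))"

lemma ball_denominator_pos:
  fixes x x0 :: "real^'n::finite"
  assumes "x \<in> ball x0 R"
  shows "0 < R^2 - (x - x0) \<bullet> (x - x0)"
proof -
  have "norm (x - x0) < R" using assms by (simp add: dist_norm norm_minus_commute)
  then have "norm (x - x0)^2 < R^2" by (simp add: power_strict_mono)
  then show ?thesis by (simp add: power2_norm_eq_inner)
qed

lemma poincare_factor_pos: "R > 0 \<Longrightarrow> x \<in> ball x0 R \<Longrightarrow> 0 < poincare_factor R x0 x"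
  using ball_denominator_pos[of x x0 R] by (simp add: poincare_factor_def)

lemma u_in_eq_poincare_factor_powr:
  "u_in b R x0 x = b * poincare_factor R x0 x powr ((real CARD('n) - 2) / 2)"
  for x :: "real^'n::finite"
  by (simp add: u_in_def poincare_factor_def dist_norm power2_norm_eq_inner)

lemma has_derivative_poincare_factor:
  fixes x0 :: "real^'n::finite"
  assumes R: "R > 0" and x: "x \<in> ball x0 R"
  shows "(poincare_factor R x0 has_derivative
           (\<lambda>h. (2 / R) * poincare_factor R x0 x ^ 2 * ((x - x0) \<bullet> h))) (at x)"
proof -
  have D: "R^2 - (x - x0) \<bullet> (x - x0) \<noteq> 0" using ball_denominator_pos[OF x] by simp
  have "((\<lambda>y. R / (R^2 - (y - x0) \<bullet> (y - x0))) has_derivative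
           (\<lambda>h. (2 / R) * poincare_factor R x0 x ^ 2 * ((x - x0) \<bullet> h))) (at x)"
    apply (rule derivative_eq_intros refl D)+
    using D R by (auto simp: poincare_factor_def field_simps inner_commute power2_eq_square)
  then show ?thesis unfolding poincare_factor_def[abs_def] .
qed

lemma has_derivative_poincare_factor_powr:
  fixes x0 :: "real^'n::finite"
  assumes R: "R > 0" and x: "x \<in> ball x0 R"
  shows "((\<lambda>y. poincare_factor R x0 y powr r) has_derivative
           (\<lambda>h. (2 * r / R) * poincare_factor R x0 x powr (r + 1) * ((x - x0) \<bullet> h))) (at x)"
proof -
  have Q: "poincare_factor R x0 x > 0" using poincare_factor_pos[OF R x] .
  then have "poincare_factor R x0 x powr (r + 1) = poincare_factor R x0 x powr r * poincare_factor R x0 x"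
    by (simp add: powr_add)
  with Q show ?thesis
    by (intro has_derivative_eq_rhs[OF has_derivative_powr[OF has_derivative_poincare_factor[OF R x]
          has_derivative_const Q]]) (auto simp: field_simps power2_eq_square)
qed

lemma continuous_on_poincare_factor:
  fixes x0 :: "real^'n::finite"
  assumes "R > 0"
  shows "continuous_on (ball x0 R) (poincare_factor R x0)"
  using has_derivative_poincare_factor[OF assms]
  by (meson continuous_at_imp_continuous_on has_derivative_continuous)

definition u_in_grad :: "real \<Rightarrow> real \<Rightarrow> real^'n::finite \<Rightarrow> real^'n \<Rightarrow> real^'n" where
  "u_in_grad b R x0 y = (let p = (real CARD('n) - 2) / 2 in
     (b * (2 * p / R) * poincare_factor R x0 y powr (p + 1)) *\<^sub>R (y - x0))"

definition u_in_hess :: "real \<Rightarrow> real \<Rightarrow> real^'n::finite \<Rightarrow> real^'n \<Rightarrow> real^'n^'n" where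
  "u_in_hess b R x0 y = (let p = (real CARD('n) - 2) / 2 in
     (b * (2 * p / R) * (2 * (p + 1) / R) * poincare_factor R x0 y powr (p + 2))
       *\<^sub>R (\<chi> i j. (y - x0)$i * (y - x0)$j)
     + (b * (2 * p / R) * poincare_factor R x0 y powr (p + 1)) *\<^sub>R mat 1)"

lemma has_derivative_u_in:
  fixes x0 :: "real^'n::finite"
  assumes "R > 0" "x \<in> ball x0 R"
  shows "(u_in b R x0 has_derivative (\<lambda>h. u_in_grad b R x0 x \<bullet> h)) (at x)"
  unfolding u_in_eq_poincare_factor_powr[abs_def]
  by (rule has_derivative_eq_rhs[OF has_derivative_mult_right
        [OF has_derivative_poincare_factor_powr[OF assms]]])
     (simp add: u_in_grad_def Let_def fun_eq_iff)

lemma has_derivative_u_in_grad: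
  fixes x0 :: "real^'n::finite"
  assumes "R > 0" "x \<in> ball x0 R"
  shows "(u_in_grad b R x0 has_derivative (\<lambda>h. u_in_hess b R x0 x *v h)) (at x)"
proof -
  define p where "p = (real CARD('n) - 2) / 2"
  define c where "c = b * (2 * p / R)"
  define P where "P = poincare_factor R x0"
  have "((\<lambda>y. c * P y powr (p + 1)) has_derivative
      (\<lambda>h. c * ((2 * (p + 1) / R) * P x powr (p + 2) * ((x - x0) \<bullet> h)))) (at x)"
    using has_derivative_mult_right[OF has_derivative_poincare_factor_powr[OF assms, of "p + 1"]]
    by (simp add: P_def add.assoc)
  moreover have "((\<lambda>y. y - x0) has_derivative (\<lambda>h. h)) (at x)"
    using has_derivative_diff[OF has_derivative_ident has_derivative_const] by simp
  ultimately have "((\<lambda>y. (c * P y powr (p + 1)) *\<^sub>R (y - x0)) has_derivative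
      (\<lambda>h. (c * P x powr (p + 1)) *\<^sub>R h +
           (c * ((2 * (p + 1) / R) * P x powr (p + 2) * ((x - x0) \<bullet> h))) *\<^sub>R (x - x0))) (at x)"
    by (rule has_derivative_scaleR)
  then show ?thesis
    unfolding u_in_grad_def[abs_def] Let_def p_def[symmetric] c_def[symmetric] P_def[symmetric]
    by (rule has_derivative_eq_rhs)
       (simp only: u_in_hess_def Let_def p_def[symmetric] c_def P_def fun_eq_iff
          matrix_vector_mult_add_rdistrib scaleR_matrix_vector_assoc[symmetric]
          outer_product_mult_vec matrix_vector_mul_lid scaleR_scaleR, simp add: ac_simps)
qed

lemma C2_on_u_in:
  fixes x0 :: "real^'n::finite"
  assumes "R > 0"
  shows "C2_on (u_in b R x0) (ball x0 R)"
  unfolding C2_on_def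
proof (intro conjI exI ballI)
  have "poincare_factor R x0 y \<noteq> 0" if "y \<in> ball x0 R" for y
    using poincare_factor_pos[OF assms that] by simp
  then have "\<forall>y\<in>ball x0 R. poincare_factor R x0 y \<noteq> 0" by blast
  then show "continuous_on (ball x0 R) (u_in_hess b R x0)"
    unfolding u_in_hess_def[abs_def] Let_def
    by (intro continuous_intros continuous_on_poincare_factor[OF assms])
qed (use has_derivative_u_in[OF assms] has_derivative_u_in_grad[OF assms] in auto)

lemma grad_hess_u_in:
  fixes x0 :: "real^'n::finite"
  assumes "R > 0" "x \<in> ball x0 R"
  shows "grad (u_in b R x0) x = u_in_grad b R x0 x" and "hess (u_in b R x0) x = u_in_hess b R x0 x"
  using grad_hess_eqI[OF open_ball assms(2) has_derivative_u_in[OF assms(1)]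
      has_derivative_u_in_grad[OF assms]] by auto

lemma continuous_on_u_in:
  fixes x0 :: "real^'n::finite"
  assumes "R > 0"
  shows "continuous_on (ball x0 R) (u_in b R x0)"
  using has_derivative_u_in[OF assms]
  by (meson continuous_at_imp_continuous_on has_derivative_continuous)

lemma u_in_pos:
  fixes x0 :: "real^'n::finite"
  assumes "R > 0" "b > 0" "x \<in> ball x0 R"
  shows "0 < u_in b R x0 x"
  using poincare_factor_pos[OF assms(1,3)] assms(2) by (simp add: u_in_eq_poincare_factor_powr)

lemma u_in_cmult: "u_in (c * b) R x0 = (\<lambda>x. c * u_in b R x0 x)"
  by (simp add: u_in_def fun_eq_iff)

definition u_in_eigenvalue :: "real \<Rightarrow> nat \<Rightarrow> real" where
  "u_in_eigenvalue b N = 2 * b powr (-4 / (real N - 2))"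

lemma conformal_exponents:
  fixes b q N :: real
  assumes b: "0 < b" and q: "0 < q" and N: "2 < N"
  defines "p \<equiv> (N - 2) / 2" and "e \<equiv> -4 / (N - 2)"
  shows "(b * q powr p) powr (- (N + 2) / (N - 2)) = b powr e / (b * q powr (p + 2))"
    and "(b * q powr p) powr (- 2 * N / (N - 2)) = b powr e / (b * q powr (p + 1))^2"
proof -
  have "- (N + 2) / (N - 2) = e - 1" "p * (e - 1) = - (p + 2)"
    using N by (simp_all add: p_def e_def field_simps)
  then have "(b * q powr p) powr (- (N + 2) / (N - 2)) = b powr (e - 1) * q powr (- (p + 2))"
    by (simp only: powr_mult powr_powr)
  then show "(b * q powr p) powr (- (N + 2) / (N - 2)) = b powr e / (b * q powr (p + 2))"
    using b by (simp add: powr_diff powr_minus_divide powr_add)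
  have "- 2 * N / (N - 2) = e - 2" "p * (e - 2) = - ((p + 1) + (p + 1))"
    using N by (simp_all add: p_def e_def field_simps)
  then have "(b * q powr p) powr (- 2 * N / (N - 2)) = b powr (e - 2) * q powr (- ((p + 1) + (p + 1)))"
    by (simp only: powr_mult powr_powr)
  then show "(b * q powr p) powr (- 2 * N / (N - 2)) = b powr e / (b * q powr (p + 1))^2"
    using b q by (simp only: powr_diff powr_minus_divide powr_add powr_numeral)
      (simp add: power2_eq_square)
qed

lemma minus_conf_hess_u_in:
  fixes x0 :: "real^'n::finite"
  assumes n: "CARD('n) \<ge> 3" and R: "R > 0" and x: "x \<in> ball x0 R" and b: "b > 0"
  shows "- conf_hess (u_in b R x0) x = u_in_eigenvalue b CARD('n) *\<^sub>R mat 1"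
proof -
  define N where "N = real CARD('n)"
  define p where "p = (N - 2) / 2"
  define Q where "Q = poincare_factor R x0 x"
  define W where "W = Q powr (p + 1)"
  define E where "E = b powr (-4 / (N - 2))"
  define e where "e = x - x0"
  have N2: "N > 2" and p0: "p > 0" and Np: "N = 2 * p + 2"
    using n by (simp_all add: N_def p_def field_simps)
  have s: "R^2 - e \<bullet> e > 0" "Q = R / (R^2 - e \<bullet> e)"
    using ball_denominator_pos[OF x] by (simp_all add: e_def Q_def poincare_factor_def)
  have Q0: "Q > 0" using poincare_factor_pos[OF R x] by (simp add: Q_def)
  have W0: "W > 0" using Q0 by (simp add: W_def)
  have QW: "Q powr (p + 2) = W * Q"
  proof -
    have "W * Q = Q powr (p + 1) * Q powr 1" using Q0 by (simp add: W_def)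
    also have "\<dots> = Q powr (p + 2)" by (simp only: powr_add[symmetric]) (simp add: add.commute)
    finally show ?thesis ..
  qed
  define \<gamma> where "\<gamma> = b * (2 * p / R) * W"
  define \<alpha> where "\<alpha> = b * (2 * p / R) * (2 * (p + 1) / R) * (W * Q)"
  have u: "u_in b R x0 x = b * Q powr p"
    by (simp add: u_in_eq_poincare_factor_powr Q_def p_def N_def)
  have "grad (u_in b R x0) x = \<gamma> *\<^sub>R e"
    using grad_hess_u_in(1)[OF R x] by (simp add: u_in_grad_def Let_def \<gamma>_def W_def Q_def e_def N_def p_def)
  moreover have "hess (u_in b R x0) x = \<alpha> *\<^sub>R (\<chi> i j. e$i * e$j) + \<gamma> *\<^sub>R mat 1"
    using grad_hess_u_in(2)[OF R x] QW
    by (simp add: u_in_hess_def Let_def \<gamma>_def \<alpha>_def W_def Q_def e_def N_def p_def)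
  ultimately have "conf_hess (u_in b R x0) x =
      (- (2 / (N - 2)) * (E / (b * (W * Q))) * \<alpha> + (2 * N / (N - 2)^2) * (E / (b * W)^2) * \<gamma>^2)
        *\<^sub>R (\<chi> i j. e$i * e$j)
      + (- (2 / (N - 2)) * (E / (b * (W * Q))) * \<gamma> - (2 / (N - 2)^2) * (E / (b * W)^2) * \<gamma>^2 * (e \<bullet> e))
        *\<^sub>R mat 1" (is "_ = ?A *\<^sub>R _ + ?B *\<^sub>R _")
    using conformal_exponents[OF b Q0 N2, folded p_def E_def, unfolded QW]
    by (simp only: conf_hess_radial u N_def[symmetric] W_def[symmetric])
  moreover have "?A = 0"
    using p0 W0 Q0 R b unfolding Np \<alpha>_def \<gamma>_def by (simp add: field_simps power2_eq_square)
  moreover have "?B = - (2 * E)"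
    using p0 W0 R b s(1) unfolding Np \<alpha>_def \<gamma>_def s(2) by (simp add: field_simps power2_eq_square)
  ultimately have "conf_hess (u_in b R x0) x = - (2 * E) *\<^sub>R mat 1" by simp
  then show ?thesis by (simp add: u_in_eigenvalue_def E_def N_def)
qed

lemma u_in_eigenvalue_cmult:
  "(\<chi> i. u_in_eigenvalue (c * b) N) = (c powr (-4 / (real N - 2))) *\<^sub>R (\<chi> i. u_in_eigenvalue b N)"
  by (simp add: u_in_eigenvalue_def vec_eq_iff powr_mult)

lemma eigvals_conf_hess_cmult_u_in:
  fixes x0 :: "real^'n::finite"
  assumes n: "CARD('n) \<ge> 3" and R: "R > 0" and y: "y \<in> ball x0 R" and a: "a > 0" and c: "c > 0"
  shows "eigvals (- conf_hess (\<lambda>x. c * u_in a R x0 x) y)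
           ((c powr (-4 / (real CARD('n) - 2))) *\<^sub>R (\<chi> i. u_in_eigenvalue a CARD('n)))"
proof -
  have "- conf_hess (\<lambda>x. c * u_in a R x0 x) y = u_in_eigenvalue (c * a) CARD('n) *\<^sub>R mat 1"
    using minus_conf_hess_u_in[OF n R y, of "c * a"] a c by (simp add: u_in_cmult)
  then show ?thesis
    using eigvals_scalar_mat[of "u_in_eigenvalue (c * a) CARD('n)"] by (simp add: u_in_eigenvalue_cmult)
qed

lemma C2_on_cmult_u_in:
  fixes x0 :: "real^'n::finite"
  assumes "R > 0" "open U" "U \<subseteq> ball x0 R"
  shows "C2_on (\<lambda>x. c * u_in a R x0 x) U"
  using C2_on_subset[OF C2_on_u_in[OF assms(1)] assms(2,3), of "c * a"] by (simp add: u_in_cmult)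

lemma eigvals_touching_u_in:
  fixes x0 :: "real^'n::finite" and \<phi> :: "real^'n \<Rightarrow> real"
  assumes n: "CARD('n) \<ge> 3" and R: "R > 0" and b: "b > 0"
    and U: "open U" "y \<in> U" "U \<subseteq> ball x0 R" and C2: "C2_on \<phi> U"
    and eq: "\<phi> y = u_in b R x0 y" and E: "eigvals (- conf_hess \<phi> y) lam"
  shows "(\<forall>x\<in>U. u_in b R x0 x \<le> \<phi> x) \<Longrightarrow> u_in_eigenvalue b CARD('n) \<le> lam $ i"
    and "(\<forall>x\<in>U. \<phi> x \<le> u_in b R x0 x) \<Longrightarrow> lam $ i \<le> u_in_eigenvalue b CARD('n)"
proof -
  have C2u: "C2_on (u_in b R x0) U" using C2_on_subset[OF C2_on_u_in[OF R] U(1,3)] .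
  have u: "h \<bullet> (- conf_hess (u_in b R x0) y *v h) = u_in_eigenvalue b CARD('n) * (h \<bullet> h)" for h
    using minus_conf_hess_u_in[OF n R _ b] U by (auto simp: scaleR_matrix_vector_assoc[symmetric])
  show "u_in_eigenvalue b CARD('n) \<le> lam $ i" if "\<forall>x\<in>U. u_in b R x0 x \<le> \<phi> x"
    using quadratic_form_conf_hess_touching[OF n C2u C2 U(2) eq that] u by (intro eigvals_ge[OF E]) simp
  show "lam $ i \<le> u_in_eigenvalue b CARD('n)" if "\<forall>x\<in>U. \<phi> x \<le> u_in b R x0 x"
    using quadratic_form_conf_hess_touching[OF n C2 C2u U(2) eq[symmetric] that] u
    by (intro eigvals_le[OF E]) simp
qed

lemma infdist_sphere:
  fixes x0 y :: "real^'n::finite"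
  assumes "y \<in> cball x0 R"
  shows "infdist y (sphere x0 R) = R - dist y x0"
proof (rule antisym)
  define v where "v = (if y = x0 then axis undefined 1 else sgn (y - x0))"
    \<comment> \<open>any unit vector serves when y is the centre\<close>
  have v: "norm v = 1" "y - x0 = dist y x0 *\<^sub>R v"
  proof -
    show "norm v = 1" by (simp add: v_def norm_sgn)
    show "y - x0 = dist y x0 *\<^sub>R v"
      by (cases "y = x0") (simp_all add: v_def sgn_div_norm dist_norm)
  qed
  define z where "z = x0 + R *\<^sub>R v"
  have R: "dist y x0 \<le> R" using assms by (simp add: dist_commute)
  then have "0 \<le> R" using zero_le_dist[of y x0] by linarith
  then have z: "z \<in> sphere x0 R" by (simp add: z_def dist_norm v(1))
  have "y - z = (y - x0) - R *\<^sub>R v" by (simp add: z_def)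
  also have "\<dots> = (dist y x0 - R) *\<^sub>R v" by (subst v(2)) (simp add: scaleR_diff_left)
  finally have "y - z = (dist y x0 - R) *\<^sub>R v" .
  then have "dist y z = R - dist y x0" using R by (simp add: dist_norm v(1))
  with z show "infdist y (sphere x0 R) \<le> R - dist y x0" by (metis infdist_le)
  have lower: "R - dist y x0 \<le> dist y w" if "w \<in> sphere x0 R" for w
    using that dist_triangle[of w x0 y] by (simp add: dist_commute)
  have ne: "sphere x0 R \<noteq> {}" using z by blast
  show "R - dist y x0 \<le> infdist y (sphere x0 R)"
    unfolding infdist_notempty[OF ne] by (rule cINF_greatest[OF ne lower])
qed

lemma u_in_blowup:
  fixes x0 :: "real^'n::finite"
  assumes n: "CARD('n) \<ge> 3" and R: "R > 0" and b: "b > 0"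
  shows "\<exists>d>0. \<forall>x\<in>ball x0 R. infdist x (sphere x0 R) < d \<longrightarrow> M < u_in b R x0 x"
proof -
  define p where "p = (real CARD('n) - 2) / 2"
  have p0: "p > 0" using n by (simp add: p_def)
  define B where "B = (max M 1 / b) powr (1 / p)"
  have B: "B \<ge> 0" "B powr p = max M 1 / b" using p0 b by (simp_all add: B_def powr_powr)
  define d where "d = 1 / (2 * (B + 1))"
  have "M < u_in b R x0 x" if x: "x \<in> ball x0 R" "R - dist x x0 < d" for x
  proof -
    define r where "r = dist x x0"
    have r: "0 \<le> r" "r < R" using x by (auto simp: r_def dist_commute)
    have "B < 1 / (2 * (R - r))"
      using x(2) r B(1) by (simp add: d_def r_def[symmetric] field_simps)
    also have "\<dots> = R / ((R - r) * (2 * R))" using R by simp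
    also have "\<dots> \<le> R / (R^2 - r^2)"
    proof (rule divide_left_mono)
      have "(R - r) * (2 * R) - (R^2 - r^2) = (R - r)^2" by (simp add: power2_eq_square algebra_simps)
      then show "R^2 - r^2 \<le> (R - r) * (2 * R)" using zero_le_power2[of "R - r"] by linarith
      show "0 < (R - r) * (2 * R) * (R^2 - r^2)"
        using r R by (intro mult_pos_pos) (auto simp: power2_eq_square mult_strict_mono)
    qed (use R in simp)
    finally have "max M 1 / b < (R / (R^2 - r^2)) powr p"
      using powr_less_mono2[OF p0 B(1)] B(2) by simp
    then show ?thesis
      using b by (simp add: u_in_def r_def[symmetric] p_def[symmetric] field_simps)
  qed
  moreover have "d > 0" using B(1) by (simp add: d_def)
  ultimately show ?thesis
    by (metis dist_commute infdist_sphere mem_ball mem_ball_imp_mem_cball)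
qed

lemma tendsto_u_in_radius:
  fixes x0 :: "real^'n::finite"
  assumes "x \<in> ball x0 R"
  shows "((\<lambda>R'. u_in a R' x0 x) \<longlongrightarrow> u_in a R x0 x) (at R)"
proof -
  have "dist x x0 < R" "0 \<le> dist x x0" using assms by (auto simp: dist_commute)
  then have D: "0 < R^2 - (dist x x0)^2" by (simp add: power_strict_mono)
  moreover have "0 < R" using \<open>dist x x0 < R\<close> zero_le_dist[of x x0] by linarith
  then have "R / (R^2 - (dist x x0)^2) \<noteq> 0" using D by (simp add: less_imp_neq[symmetric])
  ultimately show ?thesis
    unfolding u_in_def by (intro tendsto_intros) auto
qed

lemma canonical_eigenvalue:
  fixes f :: "real^'n::finite \<Rightarrow> real"
  assumes n: "CARD('n) \<ge> 3" and S: "structural f \<Gamma>" and C: "canonical_const f \<Gamma> a"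
  shows "(\<chi> i. u_in_eigenvalue a CARD('n)) \<in> \<Gamma>" and "f (\<chi> i. u_in_eigenvalue a CARD('n)) = 1"
proof -
  have a: "a > 0" using C by (simp add: canonical_const_def)
  have "eq_cond f \<Gamma> (- conf_hess (u_in a 1 (0::real^'n)) 0)"
    using C by (simp add: canonical_const_def)
  then have "eq_cond f \<Gamma> (u_in_eigenvalue a CARD('n) *\<^sub>R mat 1)"
    by (simp add: minus_conf_hess_u_in[OF n _ _ a])
  then have "(\<chi> i. u_in_eigenvalue a CARD('n)) \<in> closure \<Gamma>"
    and f1: "f (\<chi> i. u_in_eigenvalue a CARD('n)) = 1"
    using eigvals_scalar_mat unfolding eq_cond_def by blast+
  then show "(\<chi> i. u_in_eigenvalue a CARD('n)) \<in> \<Gamma>"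
    using f_eq_0_if_not_mem[OF S] by force
  show "f (\<chi> i. u_in_eigenvalue a CARD('n)) = 1" by (rule f1)
qed

lemma canonical_eigenvalue_scaled:
  fixes f :: "real^'n::finite \<Rightarrow> real"
  assumes n: "CARD('n) \<ge> 3" and S: "structural f \<Gamma>" and C: "canonical_const f \<Gamma> a"
  obtains k where "k > 0"
    and "\<And>s. s > 0 \<Longrightarrow> s *\<^sub>R (\<chi> i. u_in_eigenvalue a CARD('n)) \<in> \<Gamma>"
    and "\<And>s. s > 0 \<Longrightarrow> f (s *\<^sub>R (\<chi> i. u_in_eigenvalue a CARD('n))) = s powr k"
  using structuralD(1,6)[OF S] canonical_eigenvalue[OF n S C] closure_subset
  by (metis mult.right_neutral subsetD)

lemma blowup_sol_u_in:
  fixes f :: "real^'n::finite \<Rightarrow> real"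
  assumes n: "CARD('n) \<ge> 3" and S: "structural f \<Gamma>" and C: "canonical_const f \<Gamma> a"
    and R: "R > 0"
  shows "blowup_sol f \<Gamma> R x0 (u_in a R x0)"
proof -
  have a: "a > 0" using C by (simp add: canonical_const_def)
  have cont: "continuous_on (ball x0 R) (u_in a R x0)" by (rule continuous_on_u_in[OF R])
  note lam0 = canonical_eigenvalue[OF n S C]
  have "visc_sub f \<Gamma> (ball x0 R) (u_in a R x0)"
    unfolding visc_sub_def sub_cond_def
  proof (rule conjI[OF continuous_on_imp_usc_lsc(1)[OF cont]], intro ballI allI impI)
    fix y \<phi> U lam
    assume "y \<in> ball x0 R" "open U \<and> y \<in> U \<and> U \<subseteq> ball x0 R \<and> C2_on \<phi> U \<and> \<phi> y = u_in a R x0 y \<and>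
        (\<forall>x\<in>U. u_in a R x0 x \<le> \<phi> x)" and "eigvals (- conf_hess \<phi> y) lam"
    then have "(\<chi> i. u_in_eigenvalue a CARD('n)) $ i \<le> lam $ i" for i
      using eigvals_touching_u_in(1)[OF n R a] by auto
    from f_mono_componentwise[OF S lam0(1) this] lam0(2)
    show "lam \<in> closure \<Gamma> \<and> 1 \<le> f lam" by simp
  qed
  moreover have "visc_super f \<Gamma> (ball x0 R) (u_in a R x0)"
    unfolding visc_super_def super_cond_def
  proof (rule conjI[OF continuous_on_imp_usc_lsc(2)[OF cont]], intro ballI allI impI)
    fix y \<phi> U lam
    assume "y \<in> ball x0 R" "open U \<and> y \<in> U \<and> U \<subseteq> ball x0 R \<and> C2_on \<phi> U \<and> \<phi> y = u_in a R x0 y \<and>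
        (\<forall>x\<in>U. \<phi> x \<le> u_in a R x0 x)" and "eigvals (- conf_hess \<phi> y) lam"
    then have "lam $ i \<le> (\<chi> i. u_in_eigenvalue a CARD('n)) $ i" for i
      using eigvals_touching_u_in(2)[OF n R a] by auto
    from f_le_componentwise[OF S lam0(1) this] lam0(2)
    show "lam \<notin> closure \<Gamma> \<or> f lam \<le> 1" by auto
  qed
  ultimately show ?thesis
    unfolding blowup_sol_def visc_sol_def
    using cont u_in_pos[OF R a] u_in_blowup[OF n R a] by blast
qed

section \<open>Uniqueness\<close>

lemma ratio_max_inside_ball:
  fixes p q :: "real^'n::finite \<Rightarrow> real"
  assumes p: "continuous_on (ball x0 \<rho>) p" "bdd_above (p ` ball x0 \<rho>)"
    and q: "continuous_on (ball x0 \<rho>) q" "\<And>y. y \<in> ball x0 \<rho> \<Longrightarrow> 0 < q y"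
    and blowup: "\<And>M. \<exists>d>0. \<forall>y\<in>ball x0 \<rho>. infdist y (sphere x0 \<rho>) < d \<longrightarrow> M < q y"
    and x: "x \<in> ball x0 \<rho>" "q x < p x"
  obtains y\<^sub>m c where "y\<^sub>m \<in> ball x0 \<rho>" "1 < c" "p y\<^sub>m = c * q y\<^sub>m"
    and "\<And>y. y \<in> ball x0 \<rho> \<Longrightarrow> p y \<le> c * q y"
proof -
  obtain B where B: "\<And>y. y \<in> ball x0 \<rho> \<Longrightarrow> p y \<le> B"
    using p(2) unfolding bdd_above_def by blast
  obtain d where d: "d > 0" "\<And>y. y \<in> ball x0 \<rho> \<Longrightarrow> infdist y (sphere x0 \<rho>) < d \<Longrightarrow> B < q y"
    using blowup[of B] by blast
  define r where "r = max (dist x0 x) (\<rho> - d / 2)"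
    \<comment> \<open>outside the closed ball of radius r we have q > B \<ge> p, so the ratio is below 1 there\<close>
  have K: "cball x0 r \<subseteq> ball x0 \<rho>" and xK: "x \<in> cball x0 r"
    using x(1) d(1) by (auto simp: r_def)
  have ne: "cball x0 r \<noteq> {}" using xK by blast
  have "continuous_on (cball x0 r) (\<lambda>y. p y / q y)"
    using K q(2) by (intro continuous_on_divide continuous_on_subset[OF p(1)]
        continuous_on_subset[OF q(1)]) (auto simp: less_imp_neq[symmetric])
  then obtain y\<^sub>m where y\<^sub>m: "y\<^sub>m \<in> cball x0 r" "\<And>y. y \<in> cball x0 r \<Longrightarrow> p y / q y \<le> p y\<^sub>m / q y\<^sub>m"
    using continuous_attains_sup[OF compact_cball ne] by blast
  define c where "c = p y\<^sub>m / q y\<^sub>m"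
  show thesis
  proof
    show "y\<^sub>m \<in> ball x0 \<rho>" using y\<^sub>m(1) K by blast
    then show "p y\<^sub>m = c * q y\<^sub>m" using q(2) by (simp add: c_def less_imp_neq[symmetric])
    have "1 < p x / q x" using x(2) q(2)[OF x(1)] by simp
    also have "\<dots> \<le> c" using y\<^sub>m(2)[OF xK] by (simp add: c_def)
    finally show c: "1 < c" .
    fix y assume y: "y \<in> ball x0 \<rho>"
    show "p y \<le> c * q y"
    proof (cases "y \<in> cball x0 r")
      case True
      then have "p y / q y \<le> c" using y\<^sub>m(2) by (simp add: c_def)
      then show ?thesis using q(2)[OF y] by (simp add: pos_divide_le_eq mult.commute)
    next
      case False
      then have "infdist y (sphere x0 \<rho>) < d"
        using y d(1) infdist_sphere[of y x0 \<rho>] by (simp add: r_def dist_commute)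
      then have "p y < q y" using B[OF y] d(2)[OF y] by simp
      also have "\<dots> \<le> c * q y" using c q(2)[OF y] by simp
      finally show ?thesis by simp
    qed
  qed
qed

lemma bdd_above_image_ball:
  fixes p :: "'a::{heine_borel,metric_space} \<Rightarrow> real"
  assumes "continuous_on S p" "cball x0 r \<subseteq> S"
  shows "bdd_above (p ` ball x0 r)"
proof -
  have "bounded (p ` cball x0 r)"
    by (intro compact_imp_bounded compact_continuous_image continuous_on_subset[OF assms] compact_cball)
  then have "bdd_above (p ` cball x0 r)" by (rule bounded_imp_bdd_above)
  then show ?thesis by (rule bdd_above_mono) auto
qed

lemma visc_sub_not_touched_above:
  fixes f :: "real^'n::finite \<Rightarrow> real" and v :: "real^'n \<Rightarrow> real"
  assumes n: "CARD('n) \<ge> 3" and S: "structural f \<Gamma>" and C: "canonical_const f \<Gamma> a"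
    and R: "R > 0" and c: "c > 1" and v: "visc_sub f \<Gamma> \<Omega> v"
    and U: "open U" "y \<in> U" "U \<subseteq> ball x0 R" "U \<subseteq> \<Omega>"
    and touch: "v y = c * u_in a R x0 y" "\<forall>x\<in>U. v x \<le> c * u_in a R x0 x"
  shows False
proof -
  obtain k where k: "k > 0"
    and val: "\<And>s. s > 0 \<Longrightarrow> f (s *\<^sub>R (\<chi> i. u_in_eigenvalue a CARD('n))) = s powr k"
    by (rule canonical_eigenvalue_scaled[OF n S C]) blast
  define s where "s = c powr (-4 / (real CARD('n) - 2))"
  have s: "0 < s" "s < 1" using c n by (simp_all add: s_def powr_less_one)
  have "sub_cond f \<Gamma> (- conf_hess (\<lambda>x. c * u_in a R x0 x) y)"
    using visc_subD[OF v U(1,2,4) C2_on_cmult_u_in[OF R U(1,3)]] touch by simp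
  moreover have "eigvals (- conf_hess (\<lambda>x. c * u_in a R x0 x) y) (s *\<^sub>R (\<chi> i. u_in_eigenvalue a CARD('n)))"
    unfolding s_def using U c C by (intro eigvals_conf_hess_cmult_u_in[OF n R]) (auto simp: canonical_const_def)
  ultimately have "1 \<le> f (s *\<^sub>R (\<chi> i. u_in_eigenvalue a CARD('n)))"
    unfolding sub_cond_def by blast
  moreover have "s powr k < 1" using powr_less_mono2[OF k, of s 1] s by simp
  ultimately show False using val[OF s(1)] by simp
qed

lemma visc_super_not_touched_below:
  fixes f :: "real^'n::finite \<Rightarrow> real" and v :: "real^'n \<Rightarrow> real"
  assumes n: "CARD('n) \<ge> 3" and S: "structural f \<Gamma>" and C: "canonical_const f \<Gamma> a"
    and R: "R > 0" and c: "0 < c" "c < 1" and v: "visc_super f \<Gamma> \<Omega> v"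
    and U: "open U" "y \<in> U" "U \<subseteq> ball x0 R" "U \<subseteq> \<Omega>"
    and touch: "v y = c * u_in a R x0 y" "\<forall>x\<in>U. c * u_in a R x0 x \<le> v x"
  shows False
proof -
  obtain k where k: "k > 0"
    and mem: "\<And>s. s > 0 \<Longrightarrow> s *\<^sub>R (\<chi> i. u_in_eigenvalue a CARD('n)) \<in> \<Gamma>"
    and val: "\<And>s. s > 0 \<Longrightarrow> f (s *\<^sub>R (\<chi> i. u_in_eigenvalue a CARD('n))) = s powr k"
    by (rule canonical_eigenvalue_scaled[OF n S C]) blast
  define s where "s = c powr (-4 / (real CARD('n) - 2))"
  have "c powr (4 / (real CARD('n) - 2)) < 1"
    using powr_less_mono2[of "4 / (real CARD('n) - 2)" c 1] c n by simp
  then have s: "1 < s" using c by (simp add: s_def powr_minus one_less_inverse)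
  have "super_cond f \<Gamma> (- conf_hess (\<lambda>x. c * u_in a R x0 x) y)"
    using visc_superD[OF v U(1,2,4) C2_on_cmult_u_in[OF R U(1,3)]] touch by simp
  moreover have "eigvals (- conf_hess (\<lambda>x. c * u_in a R x0 x) y) (s *\<^sub>R (\<chi> i. u_in_eigenvalue a CARD('n)))"
    unfolding s_def using U c C by (intro eigvals_conf_hess_cmult_u_in[OF n R]) (auto simp: canonical_const_def)
  ultimately have "s *\<^sub>R (\<chi> i. u_in_eigenvalue a CARD('n)) \<notin> closure \<Gamma> \<or>
      f (s *\<^sub>R (\<chi> i. u_in_eigenvalue a CARD('n))) \<le> 1"
    unfolding super_cond_def by blast
  moreover have "1 < s powr k" using gr_one_powr[OF s k] .
  ultimately show False using s mem[of s] val[of s] closure_subset by force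
qed

lemma blowup_solD:
  assumes "blowup_sol f \<Gamma> R x0 v"
  shows "continuous_on (ball x0 R) v" and "visc_sub f \<Gamma> (ball x0 R) v"
    and "visc_super f \<Gamma> (ball x0 R) v" and "\<And>x. x \<in> ball x0 R \<Longrightarrow> 0 < v x"
    and "\<And>M. \<exists>d>0. \<forall>x\<in>ball x0 R. infdist x (sphere x0 R) < d \<longrightarrow> M < v x"
  using assms unfolding blowup_sol_def visc_sol_def by auto

lemma blowup_sol_le_u_in_smaller:
  fixes f :: "real^'n::finite \<Rightarrow> real"
  assumes n: "CARD('n) \<ge> 3" and S: "structural f \<Gamma>" and C: "canonical_const f \<Gamma> a"
    and v: "blowup_sol f \<Gamma> R x0 v" and R': "R' < R" and x: "x \<in> ball x0 R'"
  shows "v x \<le> u_in a R' x0 x"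
proof (rule ccontr)
  assume gt: "\<not> v x \<le> u_in a R' x0 x"
  have "dist x0 x < R'" using x by simp
  then have R'0: "R' > 0" using zero_le_dist[of x0 x] by linarith
  have a: "a > 0" using C by (simp add: canonical_const_def)
  have K: "cball x0 R' \<subseteq> ball x0 R" using R' by auto
  obtain y c where y: "y \<in> ball x0 R'" and c: "1 < c" and touch: "v y = c * u_in a R' x0 y"
    "\<And>z. z \<in> ball x0 R' \<Longrightarrow> v z \<le> c * u_in a R' x0 z"
  proof (rule ratio_max_inside_ball)
    show "continuous_on (ball x0 R') v"
      by (rule continuous_on_subset[OF blowup_solD(1)[OF v]]) (use K ball_subset_cball in blast)
    show "bdd_above (v ` ball x0 R')" by (rule bdd_above_image_ball[OF blowup_solD(1)[OF v] K])
    show "continuous_on (ball x0 R') (u_in a R' x0)" by (rule continuous_on_u_in[OF R'0])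
    show "0 < u_in a R' x0 z" if "z \<in> ball x0 R'" for z by (rule u_in_pos[OF R'0 a that])
    show "\<exists>d>0. \<forall>z\<in>ball x0 R'. infdist z (sphere x0 R') < d \<longrightarrow> M < u_in a R' x0 z" for M
      by (rule u_in_blowup[OF n R'0 a])
    show "x \<in> ball x0 R'" "u_in a R' x0 x < v x" using x gt by auto
  qed blast
  show False
    using K touch by (intro visc_sub_not_touched_above[OF n S C R'0 c blowup_solD(2)[OF v] open_ball y]) auto
qed

lemma u_in_larger_le_blowup_sol:
  fixes f :: "real^'n::finite \<Rightarrow> real"
  assumes n: "CARD('n) \<ge> 3" and S: "structural f \<Gamma>" and C: "canonical_const f \<Gamma> a"
    and v: "blowup_sol f \<Gamma> R x0 v" and R': "R < R'" and x: "x \<in> ball x0 R"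
  shows "u_in a R' x0 x \<le> v x"
proof (rule ccontr)
  assume gt: "\<not> u_in a R' x0 x \<le> v x"
  have "dist x0 x < R" using x by simp
  then have R'0: "R' > 0" using R' zero_le_dist[of x0 x] by linarith
  have a: "a > 0" using C by (simp add: canonical_const_def)
  have K: "cball x0 R \<subseteq> ball x0 R'" using R' by auto
  obtain y c where y: "y \<in> ball x0 R" and c: "1 < c" and touch: "u_in a R' x0 y = c * v y"
    "\<And>z. z \<in> ball x0 R \<Longrightarrow> u_in a R' x0 z \<le> c * v z"
  proof (rule ratio_max_inside_ball)
    show "continuous_on (ball x0 R) (u_in a R' x0)"
      by (rule continuous_on_subset[OF continuous_on_u_in[OF R'0]]) (use K ball_subset_cball in blast)
    show "bdd_above (u_in a R' x0 ` ball x0 R)"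
      by (rule bdd_above_image_ball[OF continuous_on_u_in[OF R'0] K])
    show "continuous_on (ball x0 R) v" by (rule blowup_solD(1)[OF v])
    show "0 < v z" if "z \<in> ball x0 R" for z by (rule blowup_solD(4)[OF v that])
    show "\<exists>d>0. \<forall>z\<in>ball x0 R. infdist z (sphere x0 R) < d \<longrightarrow> M < v z" for M
      by (rule blowup_solD(5)[OF v])
    show "x \<in> ball x0 R" "v x < u_in a R' x0 x" using x gt by auto
  qed blast
  have c': "0 < 1 / c" "1 / c < 1" using c by auto
  have "v y = (1 / c) * u_in a R' x0 y" "\<forall>z\<in>ball x0 R. (1 / c) * u_in a R' x0 z \<le> v z"
    using c touch by (auto simp: field_simps)
  then show False
    using K by (intro visc_super_not_touched_below[where c = "1 / c", OF n S C R'0 c'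
        blowup_solD(3)[OF v] open_ball y]) auto
qed

lemma blowup_sol_unique:
  fixes f :: "real^'n::finite \<Rightarrow> real"
  assumes n: "CARD('n) \<ge> 3" and S: "structural f \<Gamma>" and C: "canonical_const f \<Gamma> a"
    and v: "blowup_sol f \<Gamma> R x0 v" and x: "x \<in> ball x0 R"
  shows "v x = u_in a R x0 x"
proof (rule antisym)
  note lim = tendsto_u_in_radius[OF x, of a]
  have "dist x0 x < R" using x by simp
  show "v x \<le> u_in a R x0 x"
  proof (rule tendsto_lowerbound[OF tendsto_mono[OF at_within_le_at lim]])
    show "\<forall>\<^sub>F R' in at_left R. v x \<le> u_in a R' x0 x"
      using eventually_at_left_real[OF \<open>dist x0 x < R\<close>]
      by eventually_elim (use blowup_sol_le_u_in_smaller[OF n S C v] in auto)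
  qed simp
  show "u_in a R x0 x \<le> v x"
  proof (rule tendsto_upperbound[OF tendsto_mono[OF at_within_le_at lim]])
    show "\<forall>\<^sub>F R' in at_right R. u_in a R' x0 x \<le> v x"
      using eventually_at_right_real[OF less_add_one]
      by eventually_elim (use u_in_larger_le_blowup_sol[OF n S C v _ x] in auto)
  qed simp
qed

theorem lemma2p3:
  fixes f :: "real^'n::finite \<Rightarrow> real" and \<Gamma> :: "(real^'n) set"
    and a R :: real and x0 :: "real^'n"
  assumes "CARD('n) \<ge> 3"
    and "structural f \<Gamma>"
    and "canonical_const f \<Gamma> a"
    and "R > 0"
  shows "blowup_sol f \<Gamma> R x0 (u_in a R x0) \<and>
         (\<forall>v. blowup_sol f \<Gamma> R x0 v \<longrightarrow> (\<forall>x\<in>ball x0 R. v x = u_in a R x0 x))"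
  using blowup_sol_u_in[OF assms] blowup_sol_unique[OF assms(1-3)] by blast

end
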